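(* Let $\mathcal{P}=\langle\mathcal{A}\mid\mathcal{R}\rangle$ be a presentation with $\mathcal{A}$ finite (and $\mathcal{R}$ possibly infinite), equipped with an index $\|\cdot\|:\mathcal{R}\to\mathbb{N}$, and let $(\alpha,\pi)$ be an area-penetration pair for $(\mathcal{P},\|\cdot\|)$. Let $\mathcal{S}$ be a set of words over $\mathcal{A}^{\pm1}$ whose normal closure in the free group $F(\mathcal{A})$ equals that of $\mathcal{R}$, let $\mathcal{Q}=\langle\mathcal{A}\mid\mathcal{S}\rangle$, and let $\mathrm{RArea}$ be the relational area function of $(\mathcal{P},\|\cdot\|)$ over $\mathcal{Q}$. Then for all $n$, $\delta_{\mathcal{Q}}(n)\le \alpha(n)\,\mathrm{RArea}(\pi(n))$.
   Context: An index on $\mathcal{R}$ is any function $\|\cdot\|:\mathcal{R}\to\mathbb{N}$, extended by $\|r^{-1}\|=\|r\|$. For a word $w$ over $\mathcal{A}^{\pm1}$ representing the identity, a null-$\mathcal{P}$-expression is a sequence $(x_i,r_i)_{i=1}^m$, $x_i$ words, $r_i\in\mathcal{R}^{\pm1}$, with $w$ freely equal to $\prod_{i=1}^m x_ir_ix_i^{-1}$; its area is $m$. A pair $(\alpha,\pi)$ of functions $\mathbb{N}\to\mathbb{N}$ is an area-penetration pair for $(\mathcal{P},\|\cdot\|)$ if every null-homotopic word $w$ with $|w|\le n$ admits a null-$\mathcal{P}$-expression $(x_i,r_i)_{i=1}^m$ with $m\le\alpha(n)$ and $\|r_i\|\le\pi(n)$ for all $i$. $\mathrm{Area}_{\mathcal{Q}}(w)$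 is the minimal area of a null-$\mathcal{Q}$-expression for $w$, and the Dehn function is $\delta_{\mathcal{Q}}(n)=\max\{\mathrm{Area}_{\mathcal{Q}}(w): w \text{ null-homotopic}, |w|\le n\}$. The relational area function of $(\mathcal{P},\|\cdot\|)$ over $\mathcal{Q}$ is $\mathrm{RArea}(n)=\max\{\mathrm{Area}_{\mathcal{Q}}(r): r\in\mathcal{R},\ \|r\|\le n\}\in\mathbb{N}\cup\{\infty\}$. *)

theory Defs
  imports Main "HOL-Library.Extended_Nat"
begin

text \<open>Letters of A^{+-1}: (a, False) is a, (a, True) is a^{-1}. Words are lists of letters.\<close>
type_synonym 'a letter = "'a \<times> bool"
type_synonym 'a word = "'a letter list"

definition inv_letter :: "'a letter \<Rightarrow> 'a letter" where
  "inv_letter l = (fst l, \<not> snd l)"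

definition inv_word :: "'a word \<Rightarrow> 'a word" where
  "inv_word w = rev (map inv_letter w)"

definition word_over :: "'a set \<Rightarrow> 'a word \<Rightarrow> bool" where
  "word_over A w \<longleftrightarrow> (\<forall>l \<in> set w. fst l \<in> A)"

definition reduce1 :: "'a word \<Rightarrow> 'a word \<Rightarrow> bool" where
  "reduce1 u v \<longleftrightarrow> (\<exists>p q x. u = p @ [x, inv_letter x] @ q \<and> v = p @ q)"

definition free_eq :: "'a word \<Rightarrow> 'a word \<Rightarrow> bool" where
  "free_eq = equivclp reduce1"

text \<open>A term (x, r, e) of an expression stands for x r^{\<epsilon>} x^{-1}, with r \<in> R and
  e = True meaning the formal inverse r^{-1}.\<close>
definition rel_power :: "'a word \<Rightarrow> bool \<Rightarrow> 'a word" where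
  "rel_power r e = (if e then inv_word r else r)"

definition expr_word :: "('a word \<times> 'a word \<times> bool) list \<Rightarrow> 'a word" where
  "expr_word es = concat (map (\<lambda>(x, r, e). x @ rel_power r e @ inv_word x) es)"

text \<open>Null-P-expression for w, P = <A | R>; its area is the length of the list.\<close>
definition null_expr :: "'a set \<Rightarrow> 'a word set \<Rightarrow> 'a word \<Rightarrow> ('a word \<times> 'a word \<times> bool) list \<Rightarrow> bool" where
  "null_expr A R w es \<longleftrightarrow>
     (\<forall>(x, r, e) \<in> set es. word_over A x \<and> r \<in> R) \<and> free_eq w (expr_word es)"

definition null_homotopic :: "'a set \<Rightarrow> 'a word set \<Rightarrow> 'a word \<Rightarrow> bool" where
  "null_homotopic A R w \<longleftrightarrow> word_over A w \<and> (\<exists>es. null_expr A R w es)"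

definition normal_closure_words :: "'a set \<Rightarrow> 'a word set \<Rightarrow> 'a word set" where
  "normal_closure_words A R = {w. null_homotopic A R w}"

definition area_penetration_pair ::
  "'a set \<Rightarrow> 'a word set \<Rightarrow> ('a word \<Rightarrow> nat) \<Rightarrow> (nat \<Rightarrow> nat) \<Rightarrow> (nat \<Rightarrow> nat) \<Rightarrow> bool" where
  "area_penetration_pair A R idx \<alpha> \<pi> \<longleftrightarrow>
     (\<forall>n w. null_homotopic A R w \<and> length w \<le> n \<longrightarrow>
        (\<exists>es. null_expr A R w es \<and> length es \<le> \<alpha> n \<and>
              (\<forall>(x, r, e) \<in> set es. idx r \<le> \<pi> n)))"

text \<open>Area (infinite if no null-expression exists).\<close>
definition Area :: "'a set \<Rightarrow> 'a word set \<Rightarrow> 'a word \<Rightarrow> enat" where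
  "Area A S w = Inf {enat (length es) | es. null_expr A S w es}"

definition Dehn :: "'a set \<Rightarrow> 'a word set \<Rightarrow> nat \<Rightarrow> enat" where
  "Dehn A S n = Sup {Area A S w | w. null_homotopic A S w \<and> length w \<le> n}"

definition RArea :: "'a set \<Rightarrow> 'a word set \<Rightarrow> ('a word \<Rightarrow> nat) \<Rightarrow> 'a word set \<Rightarrow> nat \<Rightarrow> enat" where
  "RArea A R idx S n = Sup {Area A S r | r. r \<in> R \<and> idx r \<le> n}"

end

theory Submission
  imports Defs
begin

text \<open>Given a null-\<open>\<R>\<close>-expression for \<open>w\<close> with at most \<open>\<alpha>(n)\<close> terms \<open>x r\<^sup>\<epsilon> x\<^sup>-\<^sup>1\<close>, each
  with \<open>\<parallel>r\<parallel> \<le> \<pi>(n)\<close>, replace every relator \<open>r\<close> by a null-\<open>\<S>\<close>-expression of area at most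
  \<open>RArea(\<pi>(n))\<close>; inverting and conjugating such an expression does not change its length,
  so the result is a null-\<open>\<S>\<close>-expression for \<open>w\<close> of area at most \<open>\<alpha>(n) RArea(\<pi>(n))\<close>.\<close>

lemma equivclp_map:
  assumes "\<And>u v. r u v \<Longrightarrow> r (f u) (f v)" and "equivclp r u v"
  shows "equivclp r (f u) (f v)"
  using assms(2)
proof (induction rule: equivclp_induct)
  case (step y z)
  then show ?case
    using assms(1) by (metis equivclp_into_equivclp)
qed simp

lemma free_eq_refl [simp]: "free_eq u u"
  unfolding free_eq_def by simp

lemma free_eq_sym: "free_eq u v \<Longrightarrow> free_eq v u"
  unfolding free_eq_def by (rule equivclp_sym)

lemma free_eq_trans [trans]: "free_eq u v \<Longrightarrow> free_eq v w \<Longrightarrow> free_eq u w"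
  unfolding free_eq_def by (rule equivclp_trans)

lemma reduce1_in_context: "reduce1 u v \<Longrightarrow> reduce1 (p @ u @ q) (p @ v @ q)"
  unfolding reduce1_def by (metis append.assoc)

lemma free_eq_in_context: "free_eq u v \<Longrightarrow> free_eq (p @ u @ q) (p @ v @ q)"
  unfolding free_eq_def
  by (rule equivclp_map[of reduce1 "\<lambda>w. p @ w @ q"]) (simp_all add: reduce1_in_context)

lemma free_eq_append: "free_eq a b \<Longrightarrow> free_eq c d \<Longrightarrow> free_eq (a @ c) (b @ d)"
  using free_eq_in_context[of a b "[]" c] free_eq_in_context[of c d b "[]"]
  by (simp add: free_eq_trans)

lemma inv_letter_inv_letter [simp]: "inv_letter (inv_letter x) = x"
  unfolding inv_letter_def by simp

lemma inv_word_Nil [simp]: "inv_word [] = []"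
  unfolding inv_word_def by simp

lemma inv_word_Cons: "inv_word (x # a) = inv_word a @ [inv_letter x]"
  unfolding inv_word_def by simp

lemma inv_word_append [simp]: "inv_word (a @ b) = inv_word b @ inv_word a"
  unfolding inv_word_def by simp

lemma inv_word_inv_word [simp]: "inv_word (inv_word a) = a"
  unfolding inv_word_def by (simp add: rev_map comp_def)

lemma reduce1_inv_word: "reduce1 u v \<Longrightarrow> reduce1 (inv_word u) (inv_word v)"
  unfolding reduce1_def by (auto simp: inv_word_def) blast

lemma free_eq_inv_word: "free_eq u v \<Longrightarrow> free_eq (inv_word u) (inv_word v)"
  unfolding free_eq_def
  by (rule equivclp_map[of reduce1 inv_word]) (simp_all add: reduce1_inv_word)

lemma free_eq_append_inv_word: "free_eq (u @ inv_word u) []"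
proof (induction u)
  case (Cons a u)
  have "free_eq ([a] @ (u @ inv_word u) @ [inv_letter a]) ([a] @ [] @ [inv_letter a])"
    using free_eq_in_context[OF Cons.IH] .
  moreover have "reduce1 [a, inv_letter a] []"
    unfolding reduce1_def by (rule exI[of _ "[]"], rule exI[of _ "[]"]) simp
  ultimately show ?case
    unfolding free_eq_def by (simp add: inv_word_Cons equivclp_into_equivclp)
qed simp

lemma free_eq_inv_word_append: "free_eq (inv_word u @ u) []"
  using free_eq_append_inv_word[of "inv_word u"] by simp

lemma rel_power_not: "rel_power r (\<not> e) = inv_word (rel_power r e)"
  unfolding rel_power_def by simp

lemma expr_word_Nil [simp]: "expr_word [] = []"
  unfolding expr_word_def by simp

lemma expr_word_Cons [simp]:
  "expr_word ((x, r, e) # es) = x @ rel_power r e @ inv_word x @ expr_word es"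
  unfolding expr_word_def by simp

lemma expr_word_append [simp]: "expr_word (es @ fs) = expr_word es @ expr_word fs"
  unfolding expr_word_def by simp

definition conj_expr :: "'a word \<Rightarrow> ('a word \<times> 'a word \<times> bool) list \<Rightarrow> ('a word \<times> 'a word \<times> bool) list"
  where "conj_expr x es = map (\<lambda>(y, r, e). (x @ y, r, e)) es"

definition inv_expr :: "('a word \<times> 'a word \<times> bool) list \<Rightarrow> ('a word \<times> 'a word \<times> bool) list"
  where "inv_expr es = rev (map (\<lambda>(y, r, e). (y, r, \<not> e)) es)"

lemma length_conj_expr [simp]: "length (conj_expr x es) = length es"
  unfolding conj_expr_def by simp

lemma length_inv_expr [simp]: "length (inv_expr es) = length es"
  unfolding inv_expr_def by simp

lemma expr_word_inv_expr: "expr_word (inv_expr es) = inv_word (expr_word es)"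
proof (induction es)
  case (Cons t es)
  obtain y r e where "t = (y, r, e)" by (cases t)
  with Cons.IH show ?case
    by (simp add: inv_expr_def rel_power_not)
qed (simp add: inv_expr_def)

lemma free_eq_expr_word_conj_expr:
  "free_eq (expr_word (conj_expr x es)) (x @ expr_word es @ inv_word x)"
proof (induction es)
  case Nil
  show ?case
    by (simp add: conj_expr_def free_eq_sym free_eq_append_inv_word)
next
  case (Cons t es)
  obtain y r e where t: "t = (y, r, e)" by (cases t)
  define c where "c = y @ rel_power r e @ inv_word y"
  have "expr_word (conj_expr x (t # es)) = (x @ c @ inv_word x) @ expr_word (conj_expr x es)"
    by (simp add: conj_expr_def t c_def)
  also have "free_eq \<dots> ((x @ c @ inv_word x) @ (x @ expr_word es @ inv_word x))"
    by (rule free_eq_append[OF free_eq_refl Cons.IH])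
  also have "\<dots> = (x @ c) @ (inv_word x @ x) @ (expr_word es @ inv_word x)"
    by simp
  also have "free_eq \<dots> ((x @ c) @ [] @ (expr_word es @ inv_word x))"
    by (rule free_eq_in_context[OF free_eq_inv_word_append])
  finally show ?case
    by (simp add: t c_def)
qed

lemma word_over_append [simp]: "word_over A (x @ y) \<longleftrightarrow> word_over A x \<and> word_over A y"
  unfolding word_over_def by auto

lemma null_expr_conj_rel_power:
  assumes "word_over A x" and "null_expr A S r es"
  shows "null_expr A S (x @ rel_power r e @ inv_word x)
           (conj_expr x (if e then inv_expr es else es))"
proof -
  define fs where "fs = (if e then inv_expr es else es)"
  have "free_eq r (expr_word es)" and terms: "\<forall>(y, s, _) \<in> set es. word_over A y \<and> s \<in> S"
    using assms(2) unfolding null_expr_def by auto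
  then have "free_eq (rel_power r e) (expr_word fs)"
    by (auto simp: fs_def rel_power_def expr_word_inv_expr intro: free_eq_inv_word)
  then have "free_eq (x @ rel_power r e @ inv_word x) (x @ expr_word fs @ inv_word x)"
    by (rule free_eq_in_context)
  also have "free_eq \<dots> (expr_word (conj_expr x fs))"
    by (rule free_eq_sym[OF free_eq_expr_word_conj_expr])
  finally have "free_eq (x @ rel_power r e @ inv_word x) (expr_word (conj_expr x fs))" .
  moreover have "\<forall>(y, s, _) \<in> set fs. word_over A y \<and> s \<in> S"
    using terms by (auto simp: fs_def inv_expr_def)
  then have "\<forall>(y, s, _) \<in> set (conj_expr x fs). word_over A y \<and> s \<in> S"
    using assms(1) by (force simp: conj_expr_def)
  ultimately have "null_expr A S (x @ rel_power r e @ inv_word x) (conj_expr x fs)"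
    by (simp add: null_expr_def)
  then show ?thesis
    by (simp add: fs_def)
qed

lemma null_expr_append:
  "null_expr A S u es \<Longrightarrow> null_expr A S v fs \<Longrightarrow> null_expr A S (u @ v) (es @ fs)"
  unfolding null_expr_def by (auto intro: free_eq_append)

lemma null_expr_free_eq: "free_eq w v \<Longrightarrow> null_expr A S v es \<Longrightarrow> null_expr A S w es"
  unfolding null_expr_def by (auto intro: free_eq_trans)

lemma null_expr_substitute:
  assumes "null_expr A R w es"
    and "\<forall>(x, r, e) \<in> set es. \<exists>fs. null_expr A S r fs \<and> length fs \<le> K"
  shows "\<exists>gs. null_expr A S w gs \<and> length gs \<le> length es * K"
proof -
  have substitute: "\<exists>gs. null_expr A S (expr_word es) gs \<and> length gs \<le> length es * K"
    if "\<forall>(x, r, e) \<in> set es. word_over A x \<and> (\<exists>fs. null_expr A S r fs \<and> length fs \<le> K)"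
    using that
  proof (induction es)
    case Nil
    show ?case
      by (auto simp: null_expr_def)
  next
    case (Cons t es)
    obtain x r e where t: "t = (x, r, e)" by (cases t)
    with Cons.prems obtain fs where "word_over A x" "null_expr A S r fs" "length fs \<le> K"
      by auto
    then obtain hs where hs: "null_expr A S (x @ rel_power r e @ inv_word x) hs" "length hs \<le> K"
      using null_expr_conj_rel_power[of A x S r fs e] by fastforce
    obtain gs where "null_expr A S (expr_word es) gs" "length gs \<le> length es * K"
      using Cons by auto
    with hs have "null_expr A S (expr_word (t # es)) (hs @ gs)"
      and "length (hs @ gs) \<le> length (t # es) * K"
      using null_expr_append[OF hs(1)] by (simp_all add: t)
    then show ?case by blast
  qed
  have "\<forall>(x, r, e) \<in> set es. word_over A x" and "free_eq w (expr_word es)"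
    using assms(1) unfolding null_expr_def by auto
  with assms(2) show ?thesis
    using substitute by (fastforce intro: null_expr_free_eq)
qed

lemma Area_le_length: "null_expr A S w es \<Longrightarrow> Area A S w \<le> enat (length es)"
  unfolding Area_def by (rule Inf_lower) blast

lemma Area_le_enatE:
  assumes "Area A S w \<le> enat K"
  obtains es where "null_expr A S w es" and "length es \<le> K"
proof -
  have "Area A S w < enat (Suc K)"
    using assms by (simp add: order_le_less_trans)
  then show ?thesis
    unfolding Area_def Inf_less_iff using that by auto
qed

lemma Area_le_RArea: "r \<in> R \<Longrightarrow> idx r \<le> n \<Longrightarrow> Area A S r \<le> RArea A R idx S n"
  unfolding RArea_def by (rule Sup_upper) blast

lemma Area_le_length_mult_RArea:
  assumes "null_expr A R w es" and "\<forall>(x, r, e) \<in> set es. idx r \<le> p"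
  shows "Area A S w \<le> enat (length es) * RArea A R idx S p"
  \<comment> \<open>\<open>0 * \<infinity> = 0\<close> in \<open>enat\<close>, so the empty expression is treated together with \<open>RArea = \<infinity>\<close>.\<close>
proof (cases "es = [] \<or> RArea A R idx S p = \<infinity>")
  case True
  moreover have "es = [] \<Longrightarrow> null_expr A S w []"
    using assms(1) by (simp add: null_expr_def)
  ultimately show ?thesis
    using Area_le_length[of A S w "[]"] by (auto simp flip: zero_enat_def)
next
  case False
  then obtain K where K: "RArea A R idx S p = enat K" by auto
  have "\<exists>fs. null_expr A S r fs \<and> length fs \<le> K" if "(x, r, e) \<in> set es" for x r e
  proof -
    have "r \<in> R" and "idx r \<le> p"
      using assms that unfolding null_expr_def by auto
    then have "Area A S r \<le> enat K"
      using Area_le_RArea K by metis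
    then show ?thesis
      by (auto elim: Area_le_enatE)
  qed
  then obtain gs where "null_expr A S w gs" "length gs \<le> length es * K"
    using null_expr_substitute[OF assms(1), of S K] by blast
  then show ?thesis
    using Area_le_length[of A S w gs] K by (simp add: order_trans)
qed

theorem proposition2p8:
  fixes A :: "'a set" and R S :: "'a word set" and idx :: "'a word \<Rightarrow> nat"
    and \<alpha> \<pi> :: "nat \<Rightarrow> nat"
  assumes "finite A"
    and "\<forall>r \<in> R. word_over A r"
    and "\<forall>s \<in> S. word_over A s"
    and "area_penetration_pair A R idx \<alpha> \<pi>"
    and "normal_closure_words A S = normal_closure_words A R"
  shows "\<forall>n. Dehn A S n \<le> enat (\<alpha> n) * RArea A R idx S (\<pi> n)"
proof
  fix n
  show "Dehn A S n \<le> enat (\<alpha> n) * RArea A R idx S (\<pi> n)"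
    unfolding Dehn_def
  proof (rule Sup_least, clarify)
    fix w assume "null_homotopic A S w" and "length w \<le> n"
    moreover have "null_homotopic A R w"
      using \<open>null_homotopic A S w\<close> assms(5) unfolding normal_closure_words_def by blast
    ultimately obtain es where es: "null_expr A R w es" "length es \<le> \<alpha> n"
        "\<forall>(x, r, e) \<in> set es. idx r \<le> \<pi> n"
      using assms(4) unfolding area_penetration_pair_def by blast
    have "Area A S w \<le> enat (length es) * RArea A R idx S (\<pi> n)"
      using Area_le_length_mult_RArea[OF es(1,3)] .
    also have "\<dots> \<le> enat (\<alpha> n) * RArea A R idx S (\<pi> n)"
      using es(2) by (intro mult_right_mono) simp_all
    finally show "Area A S w \<le> enat (\<alpha> n) * RArea A R idx S (\<pi> n)" .
  qed
qed

end
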